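(* Let $R$ be a commutative associative ring with unity, let $\operatorname{T}=\{x_1,x_2,\ldots\}$ be a trivial quandle with more than one element, $A=R[\operatorname{T}]$, $L=A^{(-)}$, and for $k\ge1$ let $L^k$ be the subalgebra of $L$ generated by products of $k$ elements of $L$. Then: (1) $L^2=L^3$, and this algebra has basis $\{x_1-x_2,\,x_2-x_3,\,\ldots\}$; in particular, if $\operatorname{T}$ has $n$ elements, then $L^2$ has rank $n-1$. (2) $(L^2)^2=0$, i.e. $L$ is metabelian. (3) If moreover $1/2\in R$ and $J=A^{(+)}$, then $J^2=J$.
   Context: A trivial quandle is a set $\operatorname{T}$ with operation $xy=x$ for all $x,y$. The quandle ring $R[\operatorname{T}]$ is the free $R$-module with basis $\operatorname{T}$, with multiplication $\big(\sum_i\alpha_i x_i\big)\big(\sum_j\beta_j x_j\big)=\sum_{i,j}\alpha_i\beta_j (x_ix_j)$. For an $R$-algebra $A$, $A^{(-)}$ is the same $R$-module with multiplication $x\circ y=xy-yx$, and (when $1/2\in R$) $A^{(+)}$ is the same $R$-module with multiplication $x\odot y=\tfrac12(xy+yx)$. For an algebra $B$, $B^2$ denotes the subalgebra generated by all products of two elements of $B$. *)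

theory Defs
  imports Main "HOL-Library.Function_Algebras"
begin

text \<open>Elements of the free R-module R[T] are finitely supported functions
  T \<Rightarrow> R, represented as functions 'a \<Rightarrow> 'r with finite support contained in T.\<close>

definition supp :: "('a \<Rightarrow> 'r::zero) \<Rightarrow> 'a set" where
  "supp f = {x. f x \<noteq> 0}"

definition qring :: "'a set \<Rightarrow> ('a \<Rightarrow> 'r::zero) set" where
  "qring T = {f. finite (supp f) \<and> supp f \<subseteq> T}"

definition bas :: "'a \<Rightarrow> 'a \<Rightarrow> 'r::zero_neq_one" where
  "bas x = (\<lambda>z. if z = x then 1 else 0)"

definition smul :: "'r::times \<Rightarrow> ('a \<Rightarrow> 'r) \<Rightarrow> 'a \<Rightarrow> 'r" where
  "smul c f = (\<lambda>z. c * f z)"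

text \<open>multiplication of the quandle ring for a quandle operation op:
  (\<Sum> f(x) x)(\<Sum> g(y) y) = \<Sum> f(x) g(y) (op x y)\<close>
definition qmult :: "('a \<Rightarrow> 'a \<Rightarrow> 'a) \<Rightarrow> ('a \<Rightarrow> 'r::comm_ring_1) \<Rightarrow> ('a \<Rightarrow> 'r) \<Rightarrow> 'a \<Rightarrow> 'r" where
  "qmult op f g = (\<lambda>z. \<Sum>x\<in>supp f. \<Sum>y\<in>supp g. if op x y = z then f x * g y else 0)"

definition triv_op :: "'a \<Rightarrow> 'a \<Rightarrow> 'a" where
  "triv_op x y = x"

definition minus_mult :: "('f \<Rightarrow> 'f \<Rightarrow> 'f) \<Rightarrow> 'f \<Rightarrow> 'f \<Rightarrow> ('f::minus)" where
  "minus_mult m a b = m a b - m b a"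

text \<open>A^(+): x \<odot> y = h (xy + yx), where h = 1/2 in R\<close>
definition plus_mult :: "'r \<Rightarrow> (('a \<Rightarrow> 'r) \<Rightarrow> ('a \<Rightarrow> 'r) \<Rightarrow> ('a \<Rightarrow> 'r)) \<Rightarrow> ('a \<Rightarrow> 'r) \<Rightarrow> ('a \<Rightarrow> 'r) \<Rightarrow> 'a \<Rightarrow> ('r::comm_ring_1)" where
  "plus_mult h m a b = smul h (m a b + m b a)"

inductive is_prod :: "('f \<Rightarrow> 'f \<Rightarrow> 'f) \<Rightarrow> 'f set \<Rightarrow> nat \<Rightarrow> 'f \<Rightarrow> bool" for m A where
  base: "a \<in> A \<Longrightarrow> is_prod m A 1 a"
| step: "is_prod m A i a \<Longrightarrow> is_prod m A j b \<Longrightarrow> is_prod m A (i + j) (m a b)"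

definition prods :: "('f \<Rightarrow> 'f \<Rightarrow> 'f) \<Rightarrow> 'f set \<Rightarrow> nat \<Rightarrow> 'f set" where
  "prods m A k = {a. is_prod m A k a}"

inductive_set subalg :: "(('a \<Rightarrow> 'r) \<Rightarrow> ('a \<Rightarrow> 'r) \<Rightarrow> ('a \<Rightarrow> 'r)) \<Rightarrow> ('a \<Rightarrow> 'r::comm_ring_1) set \<Rightarrow> ('a \<Rightarrow> 'r) set"
  for m S where
  gen: "a \<in> S \<Longrightarrow> a \<in> subalg m S"
| zero: "0 \<in> subalg m S"
| add: "a \<in> subalg m S \<Longrightarrow> b \<in> subalg m S \<Longrightarrow> a + b \<in> subalg m S"
| smul: "a \<in> subalg m S \<Longrightarrow> smul c a \<in> subalg m S"
| mult: "a \<in> subalg m S \<Longrightarrow> b \<in> subalg m S \<Longrightarrow> m a b \<in> subalg m S"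

definition alg_pow :: "(('a \<Rightarrow> 'r) \<Rightarrow> ('a \<Rightarrow> 'r) \<Rightarrow> ('a \<Rightarrow> 'r)) \<Rightarrow> ('a \<Rightarrow> 'r::comm_ring_1) set \<Rightarrow> nat \<Rightarrow> ('a \<Rightarrow> 'r) set" where
  "alg_pow m A k = subalg m (prods m A k)"

definition rspan :: "('a \<Rightarrow> 'r::comm_ring_1) set \<Rightarrow> ('a \<Rightarrow> 'r) set" where
  "rspan B = {(\<Sum>b\<in>S. smul (c b) b) | S c. finite S \<and> S \<subseteq> B}"

definition rindep :: "('a \<Rightarrow> 'r::comm_ring_1) set \<Rightarrow> bool" where
  "rindep B = (\<forall>S c. finite S \<and> S \<subseteq> B \<and> (\<Sum>b\<in>S. smul (c b) b) = 0 \<longrightarrow> (\<forall>b\<in>S. c b = 0))"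

definition is_basis :: "('a \<Rightarrow> 'r::comm_ring_1) set \<Rightarrow> ('a \<Rightarrow> 'r) set \<Rightarrow> bool" where
  "is_basis B M = (B \<subseteq> M \<and> rindep B \<and> rspan B = M)"

end

theory Submission
  imports Defs
begin

text \<open>
  For the trivial quandle the product of \<open>R[T]\<close> is \<open>f g = \<epsilon>(g) f\<close>, where \<open>\<epsilon>\<close> is the
  augmentation (the sum of the coefficients). Hence the commutator
  \<open>[f, g] = \<epsilon>(g) f - \<epsilon>(f) g\<close> takes values in the augmentation ideal \<open>\<Delta> = ker \<epsilon>\<close>,
  vanishes on \<open>\<Delta> \<times> \<Delta>\<close>, and satisfies \<open>[f, x] = f\<close> for \<open>f \<in> \<Delta>\<close> and every basis
  element \<open>x\<close>. So the products of \<open>k \<ge> 2\<close> elements of \<open>L\<close> are exactly the elements of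
  \<open>\<Delta>\<close>, whence \<open>L\<^sup>k = \<Delta>\<close> for all \<open>k \<ge> 2\<close> and \<open>(L\<^sup>2)\<^sup>2 = 0\<close>. The differences
  of consecutive basis elements span \<open>\<Delta>\<close> by telescoping, and they are independent
  because their values at the points \<open>x\<^sub>k\<close> form a unitriangular matrix. In \<open>J\<close> every
  basis element is idempotent, \<open>x \<odot> x = x\<close>, so \<open>J\<^sup>k = J\<close> for all \<open>k \<ge> 1\<close>.
\<close>

lemma sum_apply: "(sum F S) z = (\<Sum>b\<in>S. F b z)"
  by (induction S rule: infinite_finite_induct) auto

lemma supp_add: "supp (f + g :: 'a \<Rightarrow> 'r::monoid_add) \<subseteq> supp f \<union> supp g"
  by (auto simp: supp_def)

lemma supp_diff: "supp (f - g :: 'a \<Rightarrow> 'r::group_add) \<subseteq> supp f \<union> supp g"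
  by (auto simp: supp_def)

lemma supp_smul: "supp (smul c f :: 'a \<Rightarrow> 'r::mult_zero) \<subseteq> supp f"
  by (auto simp: supp_def smul_def)

lemma supp_zero [simp]: "supp 0 = {}"
  by (simp add: supp_def)

lemma supp_bas [simp]: "supp (bas x) = {x}"
  by (auto simp: supp_def bas_def)

lemma smul_one [simp]: "smul 1 (f :: 'a \<Rightarrow> 'r::monoid_mult) = f"
  by (simp add: smul_def)

lemma smul_smul: "smul c (smul d f) = smul (c * d) (f :: 'a \<Rightarrow> 'r::semigroup_mult)"
  by (simp add: smul_def mult.assoc)

lemma smul_add_left: "smul (c + d) f = smul c f + smul d (f :: 'a \<Rightarrow> 'r::semiring)"
  by (rule ext) (simp add: smul_def distrib_right)

lemma smul_sum: "smul c (sum F S) = (\<Sum>b\<in>S. smul c (F b :: 'a \<Rightarrow> 'r::comm_semiring_0))"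
  by (rule ext) (simp add: sum_apply smul_def sum_distrib_left)

definition rsubmodule :: "('a \<Rightarrow> 'r::comm_ring_1) set \<Rightarrow> bool" where
  "rsubmodule M \<longleftrightarrow> 0 \<in> M \<and> (\<forall>a\<in>M. \<forall>b\<in>M. a + b \<in> M) \<and> (\<forall>c. \<forall>a\<in>M. smul c a \<in> M)"

lemma rsubmoduleI:
  assumes "0 \<in> M" "\<And>a b. a \<in> M \<Longrightarrow> b \<in> M \<Longrightarrow> a + b \<in> M" "\<And>c a. a \<in> M \<Longrightarrow> smul c a \<in> M"
  shows "rsubmodule M"
  using assms by (simp add: rsubmodule_def)

lemma
  assumes "rsubmodule M"
  shows rsubmodule_zero: "0 \<in> M"
    and rsubmodule_add: "a \<in> M \<Longrightarrow> b \<in> M \<Longrightarrow> a + b \<in> M"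
    and rsubmodule_smul: "a \<in> M \<Longrightarrow> smul c a \<in> M"
  using assms by (auto simp: rsubmodule_def)

lemma rsubmodule_sum:
  assumes "rsubmodule M" "\<And>b. b \<in> S \<Longrightarrow> F b \<in> M"
  shows "sum F S \<in> M"
  using assms(2) by (induction S rule: infinite_finite_induct)
    (auto intro: rsubmodule_zero[OF assms(1)] rsubmodule_add[OF assms(1)])

lemma rsubmodule_zero_set: "rsubmodule {0 :: 'a \<Rightarrow> 'r::comm_ring_1}"
  by (rule rsubmoduleI) (simp_all add: smul_def zero_fun_def)

lemma sum_smul_superset:
  assumes "finite U" "S \<subseteq> U"
  shows "(\<Sum>b\<in>S. smul (c b) b) = (\<Sum>b\<in>U. smul (if b \<in> S then c b else 0) (b :: 'a \<Rightarrow> 'r::comm_ring_1))"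
  using assms by (intro sum.mono_neutral_cong_left) (auto simp: smul_def zero_fun_def)

lemma rspanI: "finite S \<Longrightarrow> S \<subseteq> B \<Longrightarrow> (\<Sum>b\<in>S. smul (c b) b) \<in> rspan B"
  unfolding rspan_def by blast

lemma rsubmodule_rspan: "rsubmodule (rspan (B :: ('a \<Rightarrow> 'r::comm_ring_1) set))"
proof (rule rsubmoduleI)
  show "0 \<in> rspan B"
    using rspanI[of "{}" B] by simp
  show "smul d a \<in> rspan B" if a_span: "a \<in> rspan B" for d a
  proof -
    obtain S c where a: "a = (\<Sum>b\<in>S. smul (c b) b)" "finite S" "S \<subseteq> B"
      using a_span unfolding rspan_def by blast
    have "smul d a = (\<Sum>b\<in>S. smul (d * c b) b)"
      unfolding a(1) smul_sum smul_smul ..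
    then show ?thesis
      using rspanI[OF a(2,3)] by simp
  qed
  show "a + a' \<in> rspan B" if a_span: "a \<in> rspan B" "a' \<in> rspan B" for a a'
  proof -
    obtain S c where a: "a = (\<Sum>b\<in>S. smul (c b) b)" "finite S" "S \<subseteq> B"
      using a_span(1) unfolding rspan_def by blast
    obtain S' c' where a': "a' = (\<Sum>b\<in>S'. smul (c' b) b)" "finite S'" "S' \<subseteq> B"
      using a_span(2) unfolding rspan_def by blast
    let ?U = "S \<union> S'"
    have "a = (\<Sum>b\<in>?U. smul (if b \<in> S then c b else 0) b)"
      unfolding a(1) using a(2) a'(2) by (intro sum_smul_superset) auto
    moreover have "a' = (\<Sum>b\<in>?U. smul (if b \<in> S' then c' b else 0) b)"
      unfolding a'(1) using a(2) a'(2) by (intro sum_smul_superset) auto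
    ultimately have "a + a' = (\<Sum>b\<in>?U. smul ((if b \<in> S then c b else 0) + (if b \<in> S' then c' b else 0)) b)"
      by (simp only: smul_add_left sum.distrib)
    then show ?thesis
      using rspanI[of ?U B] a(2,3) a'(2,3) by simp
  qed
qed

lemma rspan_gen: "b \<in> B \<Longrightarrow> b \<in> rspan (B :: ('a \<Rightarrow> 'r::comm_ring_1) set)"
  using rspanI[of "{b}" B "\<lambda>_. 1"] by simp

lemma rspan_subset: "rsubmodule M \<Longrightarrow> B \<subseteq> M \<Longrightarrow> rspan B \<subseteq> M"
  unfolding rspan_def by (auto intro!: rsubmodule_sum rsubmodule_smul)

lemma rindep_unitriangular:
  fixes d :: "nat \<Rightarrow> 'a \<Rightarrow> 'r::comm_ring_1"
  assumes diag: "\<And>i. i \<in> K \<Longrightarrow> d i (p i) = 1"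
    and upper: "\<And>i k. i \<in> K \<Longrightarrow> k \<in> K \<Longrightarrow> k < i \<Longrightarrow> d i (p k) = 0"
  shows "rindep (d ` K)"
  unfolding rindep_def
proof (intro allI impI ballI)
  fix S c b
  assume S: "finite S \<and> S \<subseteq> d ` K \<and> (\<Sum>b\<in>S. smul (c b) b) = 0" and "b \<in> S"
  \<comment> \<open>Evaluating at \<open>p i\<close> isolates \<open>c (d i)\<close>: the \<open>d j\<close> with \<open>j < i\<close> have coefficient 0
    by induction, and those with \<open>j > i\<close> vanish at \<open>p i\<close>.\<close>
  have "c (d i) = 0" if "i \<in> K" "d i \<in> S" for i
    using that
  proof (induction i rule: less_induct)
    case (less i)
    have rest: "(\<Sum>b\<in>S - {d i}. c b * b (p i)) = 0"
    proof (rule sum.neutral, rule ballI)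
      fix b assume b: "b \<in> S - {d i}"
      then obtain j where j: "j \<in> K" "b = d j"
        using S by auto
      with b have "j < i \<or> i < j"
        by (auto simp: neq_iff)
      then show "c b * b (p i) = 0"
        using less j b upper[of j i] by auto
    qed
    have "0 = (\<Sum>b\<in>S. smul (c b) b) (p i)"
      using S by simp
    also have "\<dots> = (\<Sum>b\<in>S. c b * b (p i))"
      by (simp add: sum_apply smul_def)
    also have "\<dots> = c (d i) * d i (p i) + (\<Sum>b\<in>S - {d i}. c b * b (p i))"
      using S less.prems(2) by (simp add: sum.remove)
    finally show "c (d i) = 0"
      using rest diag[OF less.prems(1)] by simp
  qed
  then show "c b = 0"
    using S \<open>b \<in> S\<close> by auto
qed

lemma inj_on_unitriangular:
  fixes d :: "nat \<Rightarrow> 'a \<Rightarrow> 'r::comm_ring_1"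
  assumes diag: "\<And>i. i \<in> K \<Longrightarrow> d i (p i) = 1"
    and upper: "\<And>i k. i \<in> K \<Longrightarrow> k \<in> K \<Longrightarrow> k < i \<Longrightarrow> d i (p k) = 0"
    and "(0 :: 'r) \<noteq> 1"
  shows "inj_on d K"
proof (rule linorder_inj_onI')
  fix i j assume "i \<in> K" "j \<in> K" "i < j"
  then have "d i (p i) \<noteq> d j (p i)"
    using diag upper assms(3) by metis
  then show "d i \<noteq> d j"
    by metis
qed

lemma rsubmodule_qring: "rsubmodule (qring T :: ('a \<Rightarrow> 'r::comm_ring_1) set)"
proof (rule rsubmoduleI)
  show "a + b \<in> qring T" if "a \<in> qring T" "b \<in> qring T" for a b :: "'a \<Rightarrow> 'r"
    using that supp_add[of a b] by (auto simp: qring_def intro: finite_subset)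
  show "smul c a \<in> qring T" if "a \<in> qring T" for c and a :: "'a \<Rightarrow> 'r"
    using that supp_smul[of c a] by (auto simp: qring_def intro: finite_subset)
qed (simp add: qring_def)

lemma qring_diff: "f \<in> qring T \<Longrightarrow> g \<in> qring T \<Longrightarrow> (f - g :: 'a \<Rightarrow> 'r::group_add) \<in> qring T"
  using supp_diff[of f g] by (auto simp: qring_def intro: finite_subset)

lemma qring_bas: "x \<in> T \<Longrightarrow> bas x \<in> qring T"
  by (simp add: qring_def)

lemma qring_finite_supp: "f \<in> qring T \<Longrightarrow> finite (supp f)"
  by (simp add: qring_def)

lemma rsubmodule_subalg: "rsubmodule (subalg m S)"
  by (rule rsubmoduleI) (auto intro: subalg.intros)

lemma subalg_subset:
  assumes "rsubmodule M" "S \<subseteq> M" and closed: "\<And>a b. a \<in> M \<Longrightarrow> b \<in> M \<Longrightarrow> m a b \<in> M"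
  shows "subalg m S \<subseteq> M"
proof
  fix a assume "a \<in> subalg m S"
  then show "a \<in> M"
    by induction (use assms in \<open>blast intro: rsubmodule_zero rsubmodule_add rsubmodule_smul\<close>)+
qed

lemma subalg_eq:
  assumes "rsubmodule M" "\<And>a b. a \<in> M \<Longrightarrow> b \<in> M \<Longrightarrow> m a b \<in> M"
  shows "subalg m M = M"
  using subalg_subset[where m = m, OF assms(1) order_refl assms(2)] subalg.gen[of _ M m] by blast

lemma is_prod_mem:
  assumes "is_prod m A k a" and closed: "\<And>a b. a \<in> A \<Longrightarrow> b \<in> A \<Longrightarrow> m a b \<in> A"
  shows "a \<in> A"
  using assms(1) by induction (auto intro: closed)

lemma is_prod_product:
  assumes "is_prod m A k a" "k \<noteq> 1" and closed: "\<And>a b. a \<in> A \<Longrightarrow> b \<in> A \<Longrightarrow> m a b \<in> A"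
  shows "\<exists>b\<in>A. \<exists>c\<in>A. a = m b c"
  using assms(1,2)
proof cases
  case (step i b j c)
  have "b \<in> A" "c \<in> A"
    using step(3,4) by (auto intro: is_prod_mem closed)
  with step(2) show ?thesis
    by blast
qed simp

definition augmentation :: "('a \<Rightarrow> 'r::comm_ring_1) \<Rightarrow> 'r" where
  "augmentation f = sum f (supp f)"

lemma augmentation_eq_sum: "finite S \<Longrightarrow> supp f \<subseteq> S \<Longrightarrow> augmentation f = sum f S"
  unfolding augmentation_def by (rule sum.mono_neutral_left) (auto simp: supp_def)

lemma augmentation_add:
  assumes "finite (supp f)" "finite (supp g)"
  shows "augmentation (f + g) = augmentation f + augmentation g"
proof -
  have "augmentation h = sum h (supp f \<union> supp g)" if "h \<in> {f, g, f + g}" for h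
    using that assms supp_add[of f g] by (intro augmentation_eq_sum) auto
  then show ?thesis by (simp add: sum.distrib)
qed

lemma augmentation_diff:
  assumes "finite (supp f)" "finite (supp g)"
  shows "augmentation (f - g) = augmentation f - augmentation g"
proof -
  have "augmentation h = sum h (supp f \<union> supp g)" if "h \<in> {f, g, f - g}" for h
    using that assms supp_diff[of f g] by (intro augmentation_eq_sum) auto
  then show ?thesis by (simp add: sum_subtractf)
qed

lemma augmentation_smul:
  assumes "finite (supp f)"
  shows "augmentation (smul c f) = c * augmentation f"
proof -
  have "augmentation (smul c f) = sum (smul c f) (supp f)"
    using assms supp_smul[of c f] by (rule augmentation_eq_sum)
  then show ?thesis
    by (simp add: augmentation_def smul_def sum_distrib_left)
qed

lemma augmentation_bas [simp]: "augmentation (bas x) = 1"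
  unfolding augmentation_def supp_bas by (simp add: bas_def)

definition aug_ideal :: "'a set \<Rightarrow> ('a \<Rightarrow> 'r::comm_ring_1) set" where
  "aug_ideal T = {f \<in> qring T. augmentation f = 0}"

lemma aug_ideal_subset_qring: "aug_ideal T \<subseteq> qring T"
  by (auto simp: aug_ideal_def)

lemma rsubmodule_aug_ideal: "rsubmodule (aug_ideal T :: ('a \<Rightarrow> 'r::comm_ring_1) set)"
proof (rule rsubmoduleI)
  show "0 \<in> aug_ideal T"
    by (simp add: aug_ideal_def augmentation_def rsubmodule_zero[OF rsubmodule_qring])
  show "a + b \<in> aug_ideal T" if "a \<in> aug_ideal T" "b \<in> aug_ideal T" for a b :: "'a \<Rightarrow> 'r"
    using that by (auto simp: aug_ideal_def augmentation_add qring_finite_supp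
        intro: rsubmodule_add[OF rsubmodule_qring])
  show "smul c a \<in> aug_ideal T" if "a \<in> aug_ideal T" for c and a :: "'a \<Rightarrow> 'r"
    using that by (auto simp: aug_ideal_def augmentation_smul qring_finite_supp
        intro: rsubmodule_smul[OF rsubmodule_qring])
qed

lemma sum_smul_bas:
  fixes f :: "'a \<Rightarrow> 'r::comm_ring_1"
  assumes "finite (supp f)"
  shows "(\<Sum>x\<in>supp f. smul (f x) (bas x)) = f"
proof
  fix z
  have "(\<Sum>x\<in>supp f. smul (f x) (bas x)) z = (\<Sum>x\<in>supp f. if x = z then f x else 0)"
    unfolding sum_apply smul_def bas_def by (intro sum.cong) simp_all
  also have "\<dots> = f z"
    using assms by (auto simp: supp_def)
  finally show "(\<Sum>x\<in>supp f. smul (f x) (bas x)) z = f z" .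
qed

lemma sum_smul_bas_diff:
  fixes f :: "'a \<Rightarrow> 'r::comm_ring_1"
  assumes "finite (supp f)" "augmentation f = 0"
  shows "(\<Sum>x\<in>supp f. smul (f x) (bas x - bas x0)) = f"
proof
  fix z
  have "(\<Sum>x\<in>supp f. smul (f x) (bas x - bas x0)) z
      = (\<Sum>x\<in>supp f. (if x = z then f x else 0) - f x * bas x0 z)"
    unfolding sum_apply smul_def bas_def by (intro sum.cong) (auto simp: algebra_simps)
  also have "\<dots> = f z - augmentation f * bas x0 z"
    using assms(1) by (auto simp: sum_subtractf supp_def augmentation_def sum_distrib_right)
  finally show "(\<Sum>x\<in>supp f. smul (f x) (bas x - bas x0)) z = f z"
    using assms(2) by simp
qed

lemma qring_subset_rsubmodule:
  assumes "rsubmodule (M :: ('a \<Rightarrow> 'r::comm_ring_1) set)" "\<And>x. x \<in> T \<Longrightarrow> bas x \<in> M"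
  shows "qring T \<subseteq> M"
proof
  fix f :: "'a \<Rightarrow> 'r" assume "f \<in> qring T"
  then have "finite (supp f)" "supp f \<subseteq> T"
    by (auto simp: qring_def)
  then have "(\<Sum>x\<in>supp f. smul (f x) (bas x)) \<in> M"
    using assms by (auto intro!: rsubmodule_sum rsubmodule_smul)
  then show "f \<in> M"
    using sum_smul_bas[OF \<open>finite (supp f)\<close>] by simp
qed

lemma aug_ideal_subset_rsubmodule:
  assumes "rsubmodule (M :: ('a \<Rightarrow> 'r::comm_ring_1) set)" "\<And>x. x \<in> T \<Longrightarrow> bas x - bas x0 \<in> M"
  shows "aug_ideal T \<subseteq> M"
proof
  fix f :: "'a \<Rightarrow> 'r" assume "f \<in> aug_ideal T"
  then have "finite (supp f)" "supp f \<subseteq> T" "augmentation f = 0"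
    by (auto simp: aug_ideal_def qring_def)
  then have "(\<Sum>x\<in>supp f. smul (f x) (bas x - bas x0)) \<in> M"
    using assms by (auto intro!: rsubmodule_sum rsubmodule_smul)
  then show "f \<in> M"
    using sum_smul_bas_diff[OF \<open>finite (supp f)\<close> \<open>augmentation f = 0\<close>] by simp
qed

lemma qmult_triv_op:
  fixes f g :: "'a \<Rightarrow> 'r::comm_ring_1"
  assumes "finite (supp f)"
  shows "qmult triv_op f g = smul (augmentation g) f"
proof
  fix z
  have "qmult triv_op f g z = (\<Sum>x\<in>supp f. if x = z then f x * augmentation g else 0)"
    unfolding qmult_def triv_op_def augmentation_def
    by (intro sum.cong refl) (auto simp: sum_distrib_left)
  also have "\<dots> = smul (augmentation g) f z"
    using assms by (auto simp: smul_def supp_def mult.commute)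
  finally show "qmult triv_op f g z = smul (augmentation g) f z" .
qed

abbreviation lie :: "('a \<Rightarrow> 'r::comm_ring_1) \<Rightarrow> ('a \<Rightarrow> 'r) \<Rightarrow> 'a \<Rightarrow> 'r" where
  "lie \<equiv> minus_mult (qmult triv_op)"

abbreviation jordan :: "'r \<Rightarrow> ('a \<Rightarrow> 'r::comm_ring_1) \<Rightarrow> ('a \<Rightarrow> 'r) \<Rightarrow> 'a \<Rightarrow> 'r" where
  "jordan h \<equiv> plus_mult h (qmult triv_op)"

lemma lie_triv_op:
  assumes "finite (supp f)" "finite (supp g)"
  shows "lie f g = smul (augmentation g) f - smul (augmentation f) g"
  using assms by (simp add: minus_mult_def qmult_triv_op)

lemma jordan_triv_op:
  assumes "finite (supp f)" "finite (supp g)"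
  shows "jordan h f g = smul h (smul (augmentation g) f + smul (augmentation f) g)"
  using assms by (simp add: plus_mult_def qmult_triv_op)

lemma lie_mem_aug_ideal:
  assumes "f \<in> qring T" "g \<in> qring T"
  shows "lie f g \<in> aug_ideal T"
proof -
  have fin: "finite (supp f)" "finite (supp g)"
    using assms by (simp_all add: qring_finite_supp)
  have q: "smul (augmentation g) f \<in> qring T" "smul (augmentation f) g \<in> qring T"
    using assms by (simp_all add: rsubmodule_smul[OF rsubmodule_qring])
  then have "augmentation (lie f g) = augmentation g * augmentation f - augmentation f * augmentation g"
    using fin by (simp add: lie_triv_op augmentation_diff augmentation_smul qring_finite_supp)
  then show ?thesis
    using q fin by (simp add: aug_ideal_def lie_triv_op qring_diff)
qed

lemma lie_aug_ideal_eq_zero: "f \<in> aug_ideal T \<Longrightarrow> g \<in> aug_ideal T \<Longrightarrow> lie f g = 0"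
  by (auto simp: aug_ideal_def lie_triv_op qring_finite_supp smul_def)

lemma lie_bas_right: "f \<in> aug_ideal T \<Longrightarrow> lie f (bas x) = f"
  by (auto simp: aug_ideal_def lie_triv_op qring_finite_supp smul_def)

lemma prods_lie_qring:
  assumes "x0 \<in> T" "2 \<le> k"
  shows "prods lie (qring T) k = (aug_ideal T :: ('a \<Rightarrow> 'r::comm_ring_1) set)"
proof
  have closed: "lie a b \<in> qring T" if "a \<in> qring T" "b \<in> qring T" for a b :: "'a \<Rightarrow> 'r"
    using lie_mem_aug_ideal[OF that] by (simp add: aug_ideal_def)
  have "a \<in> aug_ideal T" if prod: "is_prod lie (qring T) k a" for a :: "'a \<Rightarrow> 'r"
  proof -
    obtain b c where "b \<in> qring T" "c \<in> qring T" "a = lie b c"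
      using is_prod_product[OF prod _ closed] assms by auto
    then show ?thesis
      by (simp add: lie_mem_aug_ideal)
  qed
  then show "prods lie (qring T) k \<subseteq> (aug_ideal T :: ('a \<Rightarrow> 'r) set)"
    by (auto simp: prods_def)
  have "is_prod lie (qring T) k f" if "f \<in> aug_ideal T" "1 \<le> k" for f :: "'a \<Rightarrow> 'r" and k
    using that(2)
  proof (induction k rule: nat_induct_at_least)
    case base
    show ?case
      using that(1) aug_ideal_subset_qring by (blast intro: is_prod.base)
  next
    case (Suc k)
    have "is_prod lie (qring T) (k + 1) (lie f (bas x0))"
      using Suc.IH assms(1) by (intro is_prod.step is_prod.base qring_bas)
    then show ?case
      using lie_bas_right[OF that(1)] by simp
  qed
  then show "(aug_ideal T :: ('a \<Rightarrow> 'r) set) \<subseteq> prods lie (qring T) k"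
    using assms(2) by (auto simp: prods_def)
qed

lemma alg_pow_lie_qring:
  assumes "T \<noteq> {}" "2 \<le> k"
  shows "alg_pow lie (qring T) k = aug_ideal T"
proof -
  obtain x0 where "x0 \<in> T" using assms(1) by blast
  have "subalg lie (aug_ideal T) = aug_ideal T"
    by (rule subalg_eq[OF rsubmodule_aug_ideal]) (use aug_ideal_subset_qring in \<open>blast intro: lie_mem_aug_ideal\<close>)
  then show ?thesis
    unfolding alg_pow_def prods_lie_qring[OF \<open>x0 \<in> T\<close> assms(2)] .
qed

lemma alg_pow_lie_aug_ideal:
  assumes "2 \<le> k"
  shows "alg_pow lie (aug_ideal T) k = {0 :: 'a \<Rightarrow> 'r::comm_ring_1}"
proof -
  have closed: "lie a b \<in> aug_ideal T" if "a \<in> aug_ideal T" "b \<in> aug_ideal T" for a b :: "'a \<Rightarrow> 'r"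
    using that aug_ideal_subset_qring by (blast intro: lie_mem_aug_ideal)
  have "a = 0" if prod: "is_prod lie (aug_ideal T) k a" for a :: "'a \<Rightarrow> 'r"
  proof -
    obtain b c where "b \<in> aug_ideal T" "c \<in> aug_ideal T" "a = lie b c"
      using is_prod_product[OF prod _ closed] assms by auto
    then show ?thesis
      by (simp add: lie_aug_ideal_eq_zero)
  qed
  then have "prods lie (aug_ideal T) k \<subseteq> {0 :: 'a \<Rightarrow> 'r}"
    by (auto simp: prods_def)
  with rsubmodule_zero_set have "subalg lie (prods lie (aug_ideal T) k) \<subseteq> {0 :: 'a \<Rightarrow> 'r}"
    by (rule subalg_subset) (simp add: minus_mult_def qmult_triv_op)
  then show ?thesis
    by (auto simp: alg_pow_def intro: subalg.zero)
qed

lemma jordan_bas_idem: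
  assumes "2 * h = (1 :: 'r::comm_ring_1)"
  shows "jordan h (bas x) (bas x) = (bas x :: 'a \<Rightarrow> 'r)"
proof
  fix z
  have "jordan h (bas x) (bas x) z = (2 * h) * (bas x z :: 'r)"
    by (simp add: jordan_triv_op smul_def algebra_simps)
  then show "jordan h (bas x) (bas x) z = bas x z"
    using assms by simp
qed

lemma alg_pow_jordan_qring:
  assumes "2 * h = (1 :: 'r::comm_ring_1)" "1 \<le> k"
  shows "alg_pow (jordan h) (qring T) k = (qring T :: ('a \<Rightarrow> 'r) set)"
proof
  have closed: "jordan h a b \<in> qring T" if "a \<in> qring T" "b \<in> qring T" for a b :: "'a \<Rightarrow> 'r"
    using that by (simp add: jordan_triv_op qring_finite_supp rsubmodule_smul rsubmodule_add rsubmodule_qring)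
  show "alg_pow (jordan h) (qring T) k \<subseteq> qring T"
    unfolding alg_pow_def
    by (rule subalg_subset[OF rsubmodule_qring _ closed]) (auto simp: prods_def intro: is_prod_mem closed)
  have "is_prod (jordan h) (qring T) k (bas x)" if "x \<in> T" "1 \<le> k" for x and k
    using that(2)
  proof (induction k rule: nat_induct_at_least)
    case base
    then show ?case using that(1) by (intro is_prod.base qring_bas)
  next
    case (Suc k)
    have "is_prod (jordan h) (qring T) (k + 1) (jordan h (bas x) (bas x))"
      using Suc.IH that(1) by (intro is_prod.step is_prod.base qring_bas)
    then show ?case
      by (simp add: jordan_bas_idem[OF assms(1)])
  qed
  then show "qring T \<subseteq> alg_pow (jordan h) (qring T) k"
    using assms(2) unfolding alg_pow_def
    by (intro qring_subset_rsubmodule rsubmodule_subalg) (auto simp: prods_def intro: subalg.gen)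
qed

definition bas_diff :: "(nat \<Rightarrow> 'a) \<Rightarrow> nat \<Rightarrow> 'a \<Rightarrow> 'r::comm_ring_1" where
  "bas_diff e i = bas (e i) - bas (e (Suc i))"

lemma bas_diff_apply:
  assumes "inj_on e I" "i \<in> I" "Suc i \<in> I" "k \<in> I"
  shows "bas_diff e i (e k) = (if k = i then 1 else if k = Suc i then -1 else 0)"
  using assms by (auto simp: bas_diff_def bas_def inj_on_eq_iff)

lemma
  assumes "inj_on e I" and down: "\<forall>i\<in>I. \<forall>j\<le>i. j \<in> I"
  shows bas_diff_diag: "i \<in> {i. Suc i \<in> I} \<Longrightarrow> bas_diff e i (e i) = 1"
    and bas_diff_upper: "i \<in> {i. Suc i \<in> I} \<Longrightarrow> k \<in> {i. Suc i \<in> I} \<Longrightarrow> k < i \<Longrightarrow> bas_diff e i (e k) = 0"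
proof -
  have "j \<in> I" if "Suc j \<in> I" for j
    using down that by auto
  then show "i \<in> {i. Suc i \<in> I} \<Longrightarrow> bas_diff e i (e i) = 1"
    and "i \<in> {i. Suc i \<in> I} \<Longrightarrow> k \<in> {i. Suc i \<in> I} \<Longrightarrow> k < i \<Longrightarrow> bas_diff e i (e k) = 0"
    by (simp_all add: bas_diff_apply[OF assms(1)])
qed

lemma rspan_bas_diff:
  assumes "bij_betw e I T" and down: "\<forall>i\<in>I. \<forall>j\<le>i. j \<in> I"
  shows "rspan (bas_diff e ` {i. Suc i \<in> I}) = (aug_ideal T :: ('a \<Rightarrow> 'r::comm_ring_1) set)"
proof
  let ?B = "bas_diff e ` {i. Suc i \<in> I} :: ('a \<Rightarrow> 'r) set"
  have "bas_diff e i \<in> aug_ideal T" if "Suc i \<in> I" for i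
  proof -
    have "e i \<in> T" "e (Suc i) \<in> T"
      using assms that by (auto simp: bij_betw_def)
    then show ?thesis
      by (simp add: aug_ideal_def bas_diff_def qring_diff qring_bas augmentation_diff)
  qed
  then show "rspan ?B \<subseteq> aug_ideal T"
    by (intro rspan_subset rsubmodule_aug_ideal) auto
  show "aug_ideal T \<subseteq> rspan ?B"
  proof (rule aug_ideal_subset_rsubmodule[OF rsubmodule_rspan])
    fix x assume "x \<in> T"
    then obtain j where "j \<in> I" "x = e j"
      using assms(1) by (auto simp: bij_betw_def)
    have "bas (e 0) - bas (e j) = (\<Sum>i<j. bas_diff e i :: 'a \<Rightarrow> 'r)"
      unfolding bas_diff_def by (rule sum_lessThan_telescope'[symmetric])
    also have "\<dots> \<in> rspan ?B"
      using \<open>j \<in> I\<close> down by (intro rsubmodule_sum[OF rsubmodule_rspan] rspan_gen) auto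
    finally have "smul (-1) (bas (e 0) - bas (e j) :: 'a \<Rightarrow> 'r) \<in> rspan ?B"
      by (rule rsubmodule_smul[OF rsubmodule_rspan])
    then show "bas x - bas (e 0) \<in> rspan ?B"
      using \<open>x = e j\<close> by (simp add: smul_def fun_diff_def)
  qed
qed

lemma is_basis_bas_diff:
  assumes "bij_betw e I T" and down: "\<forall>i\<in>I. \<forall>j\<le>i. j \<in> I"
  shows "is_basis (bas_diff e ` {i. Suc i \<in> I}) (aug_ideal T :: ('a \<Rightarrow> 'r::comm_ring_1) set)"
proof -
  let ?B = "bas_diff e ` {i. Suc i \<in> I} :: ('a \<Rightarrow> 'r) set"
  have inj: "inj_on e I"
    using assms(1) by (simp add: bij_betw_def)
  have "rindep ?B"
    using bas_diff_diag[OF inj down] bas_diff_upper[OF inj down] by (rule rindep_unitriangular)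
  moreover have "?B \<subseteq> rspan ?B"
    using rspan_gen[of _ ?B] by blast
  ultimately show ?thesis
    unfolding is_basis_def rspan_bas_diff[OF assms] by blast
qed

lemma card_bas_diff:
  assumes "inj_on e {..<n}" "(0 :: 'r::comm_ring_1) \<noteq> 1"
  shows "card (bas_diff e ` {i. Suc i \<in> {..<n}} :: ('a \<Rightarrow> 'r) set) = n - 1"
proof -
  have down: "\<forall>i\<in>{..<n}. \<forall>j\<le>i. j \<in> {..<n}"
    by auto
  have "inj_on (bas_diff e :: nat \<Rightarrow> 'a \<Rightarrow> 'r) {i. Suc i \<in> {..<n}}"
    using bas_diff_diag[OF assms(1) down] bas_diff_upper[OF assms(1) down] assms(2)
    by (rule inj_on_unitriangular)
  moreover have "{i. Suc i \<in> {..<n}} = {..<n - 1}"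
    by auto
  ultimately show ?thesis
    by (simp add: card_image)
qed

theorem theorem8p3:
  fixes T :: "'a set" and e :: "nat \<Rightarrow> 'a" and I :: "nat set"
  assumes enum: "bij_betw e I T"
    and index: "I = UNIV \<or> (\<exists>n. I = {..<n})"
    and more_than_one: "\<exists>x\<in>T. \<exists>y\<in>T. x \<noteq> y"
    and nontriv: "(0::'r::comm_ring_1) \<noteq> 1"
  defines "A \<equiv> (qring T :: ('a \<Rightarrow> 'r) set)"
    and "Lm \<equiv> minus_mult (qmult triv_op) :: ('a \<Rightarrow> 'r) \<Rightarrow> ('a \<Rightarrow> 'r) \<Rightarrow> ('a \<Rightarrow> 'r)"
    and "Bs \<equiv> {bas (e i) - bas (e (Suc i)) | i. Suc i \<in> I} :: ('a \<Rightarrow> 'r) set"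
  shows "alg_pow Lm A 2 = alg_pow Lm A 3
    \<and> is_basis Bs (alg_pow Lm A 2)
    \<and> (finite T \<longrightarrow> card Bs = card T - 1)
    \<and> alg_pow Lm (alg_pow Lm A 2) 2 = {0}
    \<and> (\<forall>h::'r. 2 * h = 1 \<longrightarrow> alg_pow (plus_mult h (qmult triv_op)) A 2 = A)"
proof -
  have down: "\<forall>i\<in>I. \<forall>j\<le>i. j \<in> I"
    using index by auto
  have Bs: "Bs = bas_diff e ` {i. Suc i \<in> I}"
    by (auto simp: Bs_def bas_diff_def)
  have "T \<noteq> {}"
    using more_than_one by blast
  then have L: "alg_pow Lm A k = aug_ideal T" if "2 \<le> k" for k
    unfolding A_def Lm_def using that by (rule alg_pow_lie_qring)
  have "card Bs = card T - 1" if "finite T"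
  proof -
    have "finite I"
      using enum that bij_betw_finite by blast
    then obtain n where "I = {..<n}"
      using index by auto
    then show ?thesis
      using card_bas_diff[OF _ nontriv] enum bij_betw_same_card unfolding Bs
      by (fastforce simp: bij_betw_def)
  qed
  then show ?thesis
    using L is_basis_bas_diff[OF enum down] alg_pow_lie_aug_ideal[of 2 T]
      alg_pow_jordan_qring[where 'r = 'r, of _ 2 T]
    unfolding Bs A_def Lm_def by simp
qed

end
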